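(* Let $\theta\in\Theta$ and $\lambda\in[0,1]$. For any $\theta'\in\Theta$ with $\|\theta-\theta'\|_2\le\frac{0.1\lambda}{G}$, any $0.4\lambda$-dominant set at $\theta$ is also a $0.2\lambda$-dominant set at $\theta'$.
   Context: $\Theta\subset\mathbb{R}^n$; $\ell:\Theta\times\mathcal Z\to[0,1]$ is $G$-Lipschitz in its first argument ($|\ell(\theta,z)-\ell(\theta',z)|\le G\|\theta-\theta'\|_2$); there are $K$ distributions $\mathcal P_i$ on $\mathcal Z$ and $R_i(\theta)=\mathbb E_{z\sim\mathcal P_i}\ell(\theta,z)$. For $\mu\ge0$, a nonempty $S\subseteq[K]$ is $\mu$-dominant at $\theta$ if $\min_{i\in S}R_i(\theta)\ge R_j(\theta)+\mu$ for all $j\in[K]\setminus S$. *)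

theory Defs
  imports "HOL-Probability.Probability"
begin

definition risk :: "(nat \<Rightarrow> 'z measure) \<Rightarrow> ('p \<Rightarrow> 'z \<Rightarrow> real) \<Rightarrow> nat \<Rightarrow> 'p \<Rightarrow> real" where
  "risk P loss i \<theta> = (\<integral>z. loss \<theta> z \<partial>(P i))"

definition dominant :: "(nat \<Rightarrow> 'p \<Rightarrow> real) \<Rightarrow> nat \<Rightarrow> real \<Rightarrow> nat set \<Rightarrow> 'p \<Rightarrow> bool" where
  "dominant R K \<mu> S \<theta> \<longleftrightarrow>
     S \<noteq> {} \<and> S \<subseteq> {1..K} \<and>
     (\<forall>i\<in>S. \<forall>j\<in>{1..K} - S. R i \<theta> \<ge> R j \<theta> + \<mu>)"

end

theory Submission
  imports Defs
begin

text \<open>The risks are expectations of a loss that is Lipschitz in \<open>\<theta>\<close>, so each risk moves by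
  at most \<open>G \<parallel>\<theta> - \<theta>'\<parallel> \<le> 0.1 \<lambda>\<close> between \<open>\<theta>\<close> and \<open>\<theta>'\<close>. A gap of \<open>0.4 \<lambda>\<close> between a risk
  inside \<open>S\<close> and one outside therefore shrinks by at most twice that, to \<open>0.2 \<lambda>\<close>.\<close>

lemma (in prob_space) abs_integral_diff_le:
  fixes f g :: "'a \<Rightarrow> real"
  assumes "integrable M f" "integrable M g"
    and "\<And>x. x \<in> space M \<Longrightarrow> \<bar>f x - g x\<bar> \<le> c"
  shows "\<bar>(\<integral>x. f x \<partial>M) - (\<integral>x. g x \<partial>M)\<bar> \<le> c"
proof -
  have "\<bar>(\<integral>x. f x \<partial>M) - (\<integral>x. g x \<partial>M)\<bar> = \<bar>\<integral>x. f x - g x \<partial>M\<bar>"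
    using assms(1,2) by simp
  also have "\<dots> \<le> (\<integral>x. \<bar>f x - g x\<bar> \<partial>M)"
    by (rule integral_abs_bound)
  also have "\<dots> \<le> (\<integral>x. c \<partial>M)"
    using assms by (intro integral_mono) auto
  also have "\<dots> = c"
    by (simp add: prob_space)
  finally show ?thesis .
qed

lemma dominant_perturb:
  assumes dom: "dominant R K \<mu> S \<theta>"
    and close: "\<And>i. i \<in> {1..K} \<Longrightarrow> \<bar>R i \<theta> - R i \<theta>'\<bar> \<le> \<epsilon>"
  shows "dominant R K (\<mu> - 2 * \<epsilon>) S \<theta>'"
  unfolding dominant_def
proof (intro conjI ballI)
  show "S \<noteq> {}" "S \<subseteq> {1..K}"
    using dom unfolding dominant_def by auto
  fix i j assume i: "i \<in> S" and j: "j \<in> {1..K} - S"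
  then have "R i \<theta> \<ge> R j \<theta> + \<mu>" "i \<in> {1..K}"
    using dom unfolding dominant_def by auto
  with close[of i] close[of j] j show "R i \<theta>' \<ge> R j \<theta>' + (\<mu> - 2 * \<epsilon>)"
    by (auto simp: abs_le_iff)
qed

theorem lemmaB8:
  fixes \<Theta> :: "(real ^ 'n) set"
    and loss :: "real ^ 'n \<Rightarrow> 'z \<Rightarrow> real"
    and P :: "nat \<Rightarrow> 'z measure"
    and K :: nat and G lam :: real
    and \<theta> \<theta>' :: "real ^ 'n" and S :: "nat set"
  assumes prob: "\<And>i. i \<in> {1..K} \<Longrightarrow> prob_space (P i)"
    and meas: "\<And>i \<phi>. i \<in> {1..K} \<Longrightarrow> \<phi> \<in> \<Theta> \<Longrightarrow> loss \<phi> \<in> borel_measurable (P i)"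
    and range: "\<And>\<phi> z. \<phi> \<in> \<Theta> \<Longrightarrow> loss \<phi> z \<in> {0..1}"
    and lip: "\<And>\<phi> \<phi>' z. \<phi> \<in> \<Theta> \<Longrightarrow> \<phi>' \<in> \<Theta> \<Longrightarrow> \<bar>loss \<phi> z - loss \<phi>' z\<bar> \<le> G * norm (\<phi> - \<phi>')"
    and \<theta>: "\<theta> \<in> \<Theta>" and \<theta>': "\<theta>' \<in> \<Theta>"
    and lam: "lam \<in> {0..1}"
    and close: "norm (\<theta> - \<theta>') \<le> 0.1 * lam / G"
    and dom: "dominant (risk P loss) K (0.4 * lam) S \<theta>"
  shows "dominant (risk P loss) K (0.2 * lam) S \<theta>'"
proof -
  have shift: "G * norm (\<theta> - \<theta>') \<le> 0.1 * lam"
  proof (cases "G > 0")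
    case True
    with close show ?thesis by (simp add: field_simps)
  next
    case False
    with lam have "0.1 * lam / G \<le> 0" by (simp add: divide_nonneg_nonpos)
    with close have "norm (\<theta> - \<theta>') = 0" by (meson norm_ge_zero order.trans antisym)
    with lam show ?thesis by simp
  qed
  have integrable: "integrable (P i) (loss \<phi>)" if "i \<in> {1..K}" "\<phi> \<in> \<Theta>" for i \<phi>
  proof -
    interpret prob_space "P i" using prob that(1) .
    show ?thesis
      using meas[OF that] range[OF that(2)] by (intro integrable_const_bound[where B=1]) auto
  qed
  have "\<bar>risk P loss i \<theta> - risk P loss i \<theta>'\<bar> \<le> 0.1 * lam" if "i \<in> {1..K}" for i
    unfolding risk_def
    using prob_space.abs_integral_diff_le[OF prob integrable integrable] lip[OF \<theta> \<theta>'] shift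
      that \<theta> \<theta>' by (meson order_trans)
  from dominant_perturb[OF dom this] show ?thesis by simp
qed

end
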